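(* Let $\alpha\in\mathbb{R}$, $\gamma>0$, and let $\mu$ be a positive Borel measure on $[0,1)$ with moments $\mu_n=\int_{[0,1)}t^n\,d\mu(t)$. Suppose there is $\varepsilon>0$ such that $\mu_n=\mathcal{O}\big(n^{-(\frac{\alpha}{2}+\varepsilon)}\big)$ as $n\to\infty$. Then the generalized Hilbert operator $\mathcal{H}_{\mu,\gamma}$ is well defined on $\mathcal{D}_\alpha$, i.e. for every $f(z)=\sum_{k=0}^\infty a_kz^k\in\mathcal{D}_\alpha$ and every $n\ge 0$ the series $\sum_{k=0}^{\infty}\mu_{n+k}a_k$ converges.
   Context: $\mathbb{D}$ is the open unit disc. For $\alpha\in\mathbb{R}$, the Dirichlet-type space $\mathcal{D}_\alpha$ consists of analytic $f(z)=\sum_{n\ge0}a_nz^n$ on $\mathbb{D}$ with $\|f\|_{\mathcal{D}_\alpha}^2=\sum_{n=0}^\infty (n+1)^{1-\alpha}|a_n|^2<\infty$. For a positive Borel measure $\mu$ on $[0,1)$ and $\gamma>0$, the generalized Hilbert operator is defined on analytic $f(z)=\sum_k a_kz^k$ by $\mathcal{H}_{\mu,\gamma}(f)(z)=\sum_{n=0}^\infty\Big(\sum_{k=0}^\infty \mu_{n+k}a_k\Big)\frac{\Gamma(n+\gamma)}{n!\,\Gamma(\gamma)}z^n$, where $\mu_j=\int_{[0,1)}t^j\,d\mu(t)$. *)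

theory Defs
  imports "HOL-Analysis.Analysis" "HOL-Library.Landau_Symbols"
begin

definition moment :: "real measure \<Rightarrow> nat \<Rightarrow> real" where
  "moment M n = (\<integral>t. t ^ n \<partial>M)"

definition borel_measure_on_01 :: "real measure \<Rightarrow> bool" where
  "borel_measure_on_01 M \<longleftrightarrow> space M = {0..<1} \<and> sets M = sets (restrict_space borel {0..<1})"

text \<open>Dirichlet-type space D_alpha, described via Taylor coefficients a of f.\<close>
definition in_Dirichlet_type :: "real \<Rightarrow> (nat \<Rightarrow> complex) \<Rightarrow> bool" where
  "in_Dirichlet_type \<alpha> a \<longleftrightarrow> summable (\<lambda>n. (real n + 1) powr (1 - \<alpha>) * (norm (a n))\<^sup>2)"

end

theory Submission
  imports Defs "HOL-Real_Asymp.Real_Asymp"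
begin

text \<open>
  For fixed n the shifted moments mu(n+k) are still O(k powr -(alpha/2 + eps)), so the series
  of mu(n+k)^2 / (k+1) powr (1 - alpha) is dominated by the convergent series of
  k powr (-1 - 2 eps). With w_k = (k+1) powr (1 - alpha), the weight of D_alpha, the termwise
  inequality |b_k a_k| <= (w_k |a_k|^2 + |b_k|^2 / w_k) / 2 then gives absolute convergence of
  the series of mu(n+k) a_k. Neither gamma nor the support of mu plays a role.
\<close>

lemma summable_mult_weighted_square_summable:
  fixes a b :: "nat \<Rightarrow> 'a::{banach, real_normed_algebra}" and w :: "nat \<Rightarrow> real"
  assumes w_pos: "\<And>k. w k > 0"
    and a: "summable (\<lambda>k. w k * (norm (a k))\<^sup>2)"
    and b: "summable (\<lambda>k. (norm (b k))\<^sup>2 / w k)"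
  shows "summable (\<lambda>k. b k * a k)"
proof (rule summable_norm_cancel, rule summable_comparison_test')
  show "summable (\<lambda>k. (w k * (norm (a k))\<^sup>2 + (norm (b k))\<^sup>2 / w k) / 2)"
    by (intro summable_divide summable_add a b)
next
  fix k
  have "0 \<le> (w k * norm (a k) - norm (b k))\<^sup>2 / w k"
    using w_pos[of k] by simp
  also have "\<dots> = w k * (norm (a k))\<^sup>2 + (norm (b k))\<^sup>2 / w k - 2 * (norm (b k) * norm (a k))"
    using w_pos[of k] by (simp add: field_simps power2_eq_square)
  finally show "norm (norm (b k * a k)) \<le> (w k * (norm (a k))\<^sup>2 + (norm (b k))\<^sup>2 / w k) / 2"
    using norm_mult_ineq[of "b k" "a k"] by simp
qed

lemma bigo_powr_shift:
  fixes f :: "nat \<Rightarrow> real"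
  assumes "f \<in> O(\<lambda>j. real j powr p)"
  shows "(\<lambda>k. f (n + k)) \<in> O(\<lambda>k. real k powr p)"
proof -
  have "filterlim (\<lambda>k. n + k) sequentially sequentially"
    by real_asymp
  with assms have "(\<lambda>k. f (n + k)) \<in> O(\<lambda>k. real (n + k) powr p)"
    by (rule landau_o.big.compose)
  also have "(\<lambda>k. real (n + k) powr p) \<in> O(\<lambda>k. real k powr p)"
    by real_asymp
  finally show ?thesis .
qed

lemma summable_square_div_Dirichlet_weight:
  fixes m :: "nat \<Rightarrow> real" and \<alpha> \<epsilon> :: real
  assumes "\<epsilon> > 0" and "m \<in> O(\<lambda>k. real k powr (-(\<alpha> / 2 + \<epsilon>)))"
  shows "summable (\<lambda>k. (m k)\<^sup>2 / (real k + 1) powr (1 - \<alpha>))"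
proof (rule summable_comparison_test_bigo)
  show "summable (\<lambda>k. norm (real k powr (-1 - 2 * \<epsilon>)))"
    using \<open>\<epsilon> > 0\<close> by (simp add: summable_real_powr_iff)
  have "(\<lambda>k. (m k)\<^sup>2 * inverse ((real k + 1) powr (1 - \<alpha>)))
      \<in> O(\<lambda>k. (real k powr (-(\<alpha> / 2 + \<epsilon>)))\<^sup>2 * inverse ((real k + 1) powr (1 - \<alpha>)))"
    using assms(2) by (intro landau_o.big.mult_right landau_o.big_power)
  also have "(\<lambda>k. (real k powr (-(\<alpha> / 2 + \<epsilon>)))\<^sup>2 * inverse ((real k + 1) powr (1 - \<alpha>)))
      \<in> O(\<lambda>k. real k powr (-1 - 2 * \<epsilon>))"
    by real_asymp
  finally show "(\<lambda>k. (m k)\<^sup>2 / (real k + 1) powr (1 - \<alpha>)) \<in> O(\<lambda>k. real k powr (-1 - 2 * \<epsilon>))"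
    by (simp add: divide_inverse)
qed

theorem lemma2p1:
  fixes \<alpha> \<gamma> \<epsilon> :: real and M :: "real measure"
  assumes "\<gamma> > 0"
    and "borel_measure_on_01 M"
    and "\<epsilon> > 0"
    and "moment M \<in> O(\<lambda>n. real n powr (-(\<alpha> / 2 + \<epsilon>)))"
  shows "\<forall>a. in_Dirichlet_type \<alpha> a \<longrightarrow>
           (\<forall>n. summable (\<lambda>k. complex_of_real (moment M (n + k)) * a k))"
proof (intro allI impI)
  fix a n
  assume "in_Dirichlet_type \<alpha> a"
  then have a: "summable (\<lambda>k. (real k + 1) powr (1 - \<alpha>) * (norm (a k))\<^sup>2)"
    by (simp add: in_Dirichlet_type_def)
  have "(\<lambda>k. moment M (n + k)) \<in> O(\<lambda>k. real k powr (-(\<alpha> / 2 + \<epsilon>)))"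
    using assms(4) by (rule bigo_powr_shift)
  with \<open>\<epsilon> > 0\<close> have "summable (\<lambda>k. (moment M (n + k))\<^sup>2 / (real k + 1) powr (1 - \<alpha>))"
    by (rule summable_square_div_Dirichlet_weight)
  then have b: "summable (\<lambda>k. (norm (complex_of_real (moment M (n + k))))\<^sup>2 / (real k + 1) powr (1 - \<alpha>))"
    by simp
  show "summable (\<lambda>k. complex_of_real (moment M (n + k)) * a k)"
    by (rule summable_mult_weighted_square_summable[OF _ a b]) simp
qed

end
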